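(* There is a constant $C$ such that for every $N\ge 2$ there exists an exact quantum query algorithm (in the model described in the context) that, for every non-decreasing $x\in\{0,1\}^N$ with $x_{N-1}=1$, outputs $f(x)=\min\{0\le i<N: x_i=1\}$ with certainty and uses at most $\log_3(N)+C$ queries.
   Context: Quantum query model: the algorithm acts on a Hilbert space with orthonormal basis $\{|z;i\rangle : z,i \text{ non-negative integers}\}$. For an input $x\in\{0,1\}^N$ the oracle is the unitary $O_x|z;i\rangle=(-1)^{x_i}|z;i\rangle$ if $0\le i<N$ and $O_x|z;i\rangle=|z;i\rangle$ if $i\ge N$. A quantum algorithm with $T$ queries is a unitary $(U O_x)^T U$ for a fixed unitary $U$ independent of $x$, applied to $|0\rangle$, followed by a measurement in the computational basis and reading of an output register. It is exact if for every admissible input the output equals the correct answer with probability 1. *)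

theory Defs
  imports Complex_Main
begin

text \<open>Basis states |z;i> are indexed by pairs (z,i) of naturals. The algorithm acts on the span of a finite set B of
  basis states (containing |0;0>); outside B the unitary is the identity.\<close>

type_synonym state = "nat \<times> nat \<Rightarrow> complex"

definition ket :: "nat \<times> nat \<Rightarrow> state" where
  "ket a = (\<lambda>b. if b = a then 1 else 0)"

definition apply_mat :: "(nat \<times> nat) set \<Rightarrow> (nat \<times> nat \<Rightarrow> nat \<times> nat \<Rightarrow> complex) \<Rightarrow> state \<Rightarrow> state" where
  "apply_mat B U v = (\<lambda>a. if a \<in> B then (\<Sum>b\<in>B. U a b * v b) else v a)"

definition unitary_on :: "(nat \<times> nat) set \<Rightarrow> (nat \<times> nat \<Rightarrow> nat \<times> nat \<Rightarrow> complex) \<Rightarrow> bool" where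
  "unitary_on B U \<longleftrightarrow> (\<forall>a\<in>B. \<forall>b\<in>B. (\<Sum>c\<in>B. cnj (U c a) * U c b) = (if a = b then 1 else 0))"

definition phase_oracle :: "nat \<Rightarrow> (nat \<Rightarrow> bool) \<Rightarrow> state \<Rightarrow> state" where
  "phase_oracle N x v = (\<lambda>(z, i). (if i < N \<and> x i then -1 else 1) * v (z, i))"

definition run :: "(nat \<times> nat) set \<Rightarrow> (nat \<times> nat \<Rightarrow> nat \<times> nat \<Rightarrow> complex) \<Rightarrow> nat \<Rightarrow> (nat \<Rightarrow> bool) \<Rightarrow> nat \<Rightarrow> state" where
  "run B U N x T = ((apply_mat B U \<circ> phase_oracle N x) ^^ T) (apply_mat B U (ket (0, 0)))"

text \<open>Exactness: measuring in the computational basis, every outcome a with nonzero amplitude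
  yields output (read by out) equal to the correct answer.\<close>
definition exact_on :: "(nat \<times> nat) set \<Rightarrow> (nat \<times> nat \<Rightarrow> nat \<times> nat \<Rightarrow> complex) \<Rightarrow> nat \<Rightarrow> nat
    \<Rightarrow> (nat \<times> nat \<Rightarrow> 'o) \<Rightarrow> ((nat \<Rightarrow> bool) \<Rightarrow> bool) \<Rightarrow> ((nat \<Rightarrow> bool) \<Rightarrow> 'o) \<Rightarrow> bool" where
  "exact_on B U N T out adm f \<longleftrightarrow>
     (\<forall>x. adm x \<longrightarrow> (\<forall>a. run B U N x T a \<noteq> 0 \<longrightarrow> out a = f x))"

definition monotone_input :: "nat \<Rightarrow> (nat \<Rightarrow> bool) \<Rightarrow> bool" where
  "monotone_input N x \<longleftrightarrow> (\<forall>i j. i \<le> j \<and> j < N \<and> x i \<longrightarrow> x j) \<and> x (N - 1)"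

definition first_one :: "nat \<Rightarrow> (nat \<Rightarrow> bool) \<Rightarrow> nat" where
  "first_one N x = (LEAST i. i < N \<and> x i)"

end

(*
  Ordered search runs digit by digit in base 27 with three queries per digit, so it needs
  3 * ceil(log_27 N) <= log_3 N + 3 queries. In the round for a digit, the state for the answer
  f depends only on the current digit b of f and on the prefix of f formed by the higher digits;
  states with different prefixes live on disjoint coordinates. A query reads the last position
  of each of the 27 sub-blocks of the current block, so in the coordinate belonging to sub-block
  J it flips the sign exactly when b <= J. Hence only Gram matrices matter: a unitary exists as
  soon as the states before each query and the oracle-flipped states after it have the same
  Gram matrix (two families with equal Gram matrices differ by a product of reflections).
  Each round is realised by translation-invariant states, whose Gram matrices are
  periodic and negacyclic autocorrelations; the required autocorrelations are attained
  exactly by correcting two explicit rational sequences.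
*)

theory Submission
  imports Defs "HOL-Library.Nat_Bijection"
begin

section \<open>Orthogonal maps with prescribed Gram matrix\<close>

definition inner_on :: "'a set \<Rightarrow> ('a \<Rightarrow> real) \<Rightarrow> ('a \<Rightarrow> real) \<Rightarrow> real" where
  "inner_on B u v = (\<Sum>a\<in>B. u a * v a)"

definition supported_on :: "'a set \<Rightarrow> ('a \<Rightarrow> real) \<Rightarrow> bool" where
  "supported_on B v \<longleftrightarrow> (\<forall>a. a \<notin> B \<longrightarrow> v a = 0)"

definition matvec_on :: "'a set \<Rightarrow> ('a \<Rightarrow> 'a \<Rightarrow> real) \<Rightarrow> ('a \<Rightarrow> real) \<Rightarrow> 'a \<Rightarrow> real" where
  "matvec_on B M v = (\<lambda>a. if a \<in> B then (\<Sum>b\<in>B. M a b * v b) else 0)"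

definition matmul_on :: "'a set \<Rightarrow> ('a \<Rightarrow> 'a \<Rightarrow> real) \<Rightarrow> ('a \<Rightarrow> 'a \<Rightarrow> real) \<Rightarrow> 'a \<Rightarrow> 'a \<Rightarrow> real" where
  "matmul_on B M1 M2 = (\<lambda>a b. \<Sum>c\<in>B. M1 a c * M2 c b)"

definition orthogonal_on :: "'a set \<Rightarrow> ('a \<Rightarrow> 'a \<Rightarrow> real) \<Rightarrow> bool" where
  "orthogonal_on B M \<longleftrightarrow> (\<forall>a\<in>B. \<forall>b\<in>B. (\<Sum>c\<in>B. M c a * M c b) = (if a = b then 1 else 0))"

definition householder_on :: "'a set \<Rightarrow> ('a \<Rightarrow> real) \<Rightarrow> 'a \<Rightarrow> 'a \<Rightarrow> real" where
  "householder_on B w = (\<lambda>a b. (if a = b then 1 else 0) - 2 * w a * w b / inner_on B w w)"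

lemma inner_on_commute: "inner_on B u v = inner_on B v u"
  unfolding inner_on_def by (simp add: mult.commute)

lemma inner_on_diff_left: "inner_on B (\<lambda>a. u a - v a) w = inner_on B u w - inner_on B v w"
  unfolding inner_on_def by (simp add: left_diff_distrib sum_subtractf)

lemma inner_on_diff_right: "inner_on B w (\<lambda>a. u a - v a) = inner_on B w u - inner_on B w v"
  unfolding inner_on_def by (simp add: right_diff_distrib sum_subtractf)

lemma inner_on_self_pos:
  assumes "finite B" "supported_on B v" "v a \<noteq> 0"
  shows "0 < inner_on B v v"
proof -
  have "a \<in> B" using assms(2,3) unfolding supported_on_def by blast
  have "0 < v a * v a" using assms(3) not_real_square_gt_zero by blast
  also have "\<dots> \<le> inner_on B v v"
    unfolding inner_on_def using assms(1) \<open>a \<in> B\<close> by (intro member_le_sum) auto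
  finally show ?thesis .
qed

lemma supported_on_matvec_on: "supported_on B (matvec_on B M v)"
  unfolding supported_on_def matvec_on_def by simp

lemma matvec_on_matmul_on:
  assumes "finite B"
  shows "matvec_on B (matmul_on B M1 M2) v = matvec_on B M1 (matvec_on B M2 v)"
proof
  fix a
  have "(\<Sum>b\<in>B. (\<Sum>c\<in>B. M1 a c * M2 c b) * v b) = (\<Sum>c\<in>B. \<Sum>b\<in>B. M1 a c * (M2 c b * v b))"
    by (simp add: sum_distrib_right mult.assoc) (rule sum.swap)
  then show "matvec_on B (matmul_on B M1 M2) v a = matvec_on B M1 (matvec_on B M2 v) a"
    by (simp add: matvec_on_def matmul_on_def sum_distrib_left cong: sum.cong)
qed

lemma sum_sum_delta:
  assumes "finite B"
  shows "(\<Sum>e\<in>B. \<Sum>f\<in>B. g e f * (if e = f then 1 else 0)) = (\<Sum>e\<in>B. g e e :: real)"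
  using assms by (simp add: if_distrib[of "\<lambda>x. _ * x"] sum.delta cong: if_cong)

lemma orthogonal_on_id: "finite B \<Longrightarrow> orthogonal_on B (\<lambda>a b. if a = b then 1 else 0)"
  using sum_sum_delta[of B "\<lambda>_ _. 1"] unfolding orthogonal_on_def
  by (simp add: if_distrib[of "\<lambda>x. x * _"] sum.delta' cong: if_cong)

lemma orthogonal_on_matmul_on:
  assumes "finite B" "orthogonal_on B M1" "orthogonal_on B M2"
  shows "orthogonal_on B (matmul_on B M1 M2)"
  unfolding orthogonal_on_def
proof (intro ballI)
  fix a b assume "a \<in> B" "b \<in> B"
  have "(\<Sum>c\<in>B. matmul_on B M1 M2 c a * matmul_on B M1 M2 c b)
      = (\<Sum>c\<in>B. \<Sum>e\<in>B. \<Sum>f\<in>B. M2 e a * M2 f b * (M1 c e * M1 c f))"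
    unfolding matmul_on_def by (simp add: sum_product mult_ac)
  also have "\<dots> = (\<Sum>e\<in>B. \<Sum>f\<in>B. \<Sum>c\<in>B. M2 e a * M2 f b * (M1 c e * M1 c f))"
    by (subst sum.swap) (rule sum.cong[OF refl], rule sum.swap)
  also have "\<dots> = (\<Sum>e\<in>B. \<Sum>f\<in>B. M2 e a * M2 f b * (\<Sum>c\<in>B. M1 c e * M1 c f))"
    by (simp add: sum_distrib_left)
  also have "\<dots> = (\<Sum>e\<in>B. \<Sum>f\<in>B. M2 e a * M2 f b * (if e = f then 1 else 0))"
    using assms(2) unfolding orthogonal_on_def by (intro sum.cong refl) simp
  also have "\<dots> = (\<Sum>e\<in>B. M2 e a * M2 e b)"
    using sum_sum_delta[OF assms(1)] .
  also have "\<dots> = (if a = b then 1 else 0)"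
    using assms(3) \<open>a \<in> B\<close> \<open>b \<in> B\<close> by (simp add: orthogonal_on_def)
  finally show "(\<Sum>c\<in>B. matmul_on B M1 M2 c a * matmul_on B M1 M2 c b) = (if a = b then 1 else 0)" .
qed

lemma inner_on_matvec_on:
  assumes "finite B" "orthogonal_on B M"
  shows "inner_on B (matvec_on B M u) (matvec_on B M v) = inner_on B u v"
proof -
  have "inner_on B (matvec_on B M u) (matvec_on B M v)
      = (\<Sum>a\<in>B. \<Sum>b\<in>B. \<Sum>c\<in>B. u b * v c * (M a b * M a c))"
    unfolding inner_on_def matvec_on_def by (simp add: sum_product mult_ac)
  also have "\<dots> = (\<Sum>b\<in>B. \<Sum>c\<in>B. \<Sum>a\<in>B. u b * v c * (M a b * M a c))"
    by (subst sum.swap) (rule sum.cong[OF refl], rule sum.swap)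
  also have "\<dots> = (\<Sum>b\<in>B. \<Sum>c\<in>B. u b * v c * (\<Sum>a\<in>B. M a b * M a c))"
    by (simp add: sum_distrib_left)
  also have "\<dots> = (\<Sum>b\<in>B. \<Sum>c\<in>B. u b * v c * (if b = c then 1 else 0))"
    using assms(2) unfolding orthogonal_on_def by (intro sum.cong refl) simp
  also have "\<dots> = inner_on B u v"
    unfolding inner_on_def by (rule sum_sum_delta[OF assms(1)])
  finally show ?thesis .
qed

lemma orthogonal_on_householder_on:
  assumes "finite B" "inner_on B w w \<noteq> 0"
  shows "orthogonal_on B (householder_on B w)"
  unfolding orthogonal_on_def
proof (intro ballI)
  fix a b assume "a \<in> B" "b \<in> B"
  define \<kappa> where "\<kappa> = 2 / inner_on B w w"
  let ?\<delta> = "\<lambda>x y. if x = y then 1 else (0::real)"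
  have entry: "householder_on B w c e = ?\<delta> c e - \<kappa> * w c * w e" for c e
    unfolding householder_on_def \<kappa>_def by simp
  have product: "(x - \<kappa> * w c * w a) * (y - \<kappa> * w c * w b)
      = x * y - \<kappa> * w b * (x * w c) - \<kappa> * w a * (y * w c) + \<kappa>\<^sup>2 * (w a * w b) * (w c * w c)"
    for x y c
    by (simp add: algebra_simps power2_eq_square)
  have "householder_on B w c a * householder_on B w c b
      = ?\<delta> c a * ?\<delta> c b - \<kappa> * w b * (?\<delta> c a * w c) - \<kappa> * w a * (?\<delta> c b * w c)
        + \<kappa>\<^sup>2 * (w a * w b) * (w c * w c)" for c
    unfolding entry by (rule product)
  then have "(\<Sum>c\<in>B. householder_on B w c a * householder_on B w c b)
      = (\<Sum>c\<in>B. ?\<delta> c a * ?\<delta> c b) - \<kappa> * w b * (\<Sum>c\<in>B. ?\<delta> c a * w c)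
        - \<kappa> * w a * (\<Sum>c\<in>B. ?\<delta> c b * w c) + \<kappa>\<^sup>2 * (w a * w b) * inner_on B w w"
    by (simp add: sum.distrib sum_subtractf sum_distrib_left inner_on_def)
  also have "\<dots> = ?\<delta> a b + (\<kappa>\<^sup>2 * inner_on B w w - 2 * \<kappa>) * (w a * w b)"
  proof -
    have "(\<Sum>c\<in>B. ?\<delta> c a * ?\<delta> c b) = ?\<delta> a b"
      using assms(1) \<open>a \<in> B\<close> by (simp add: if_distrib[of "\<lambda>x. x * _"] cong: if_cong)
    moreover have "(\<Sum>c\<in>B. ?\<delta> c e * w c) = w e" if "e \<in> B" for e
      using assms(1) that by (simp add: if_distrib[of "\<lambda>x. x * _"] cong: if_cong)
    ultimately show ?thesis
      using \<open>a \<in> B\<close> \<open>b \<in> B\<close> by (simp add: algebra_simps)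
  qed
  also have "\<kappa>\<^sup>2 * inner_on B w w - 2 * \<kappa> = 0"
    using assms(2) by (simp add: \<kappa>_def power2_eq_square)
  finally show "(\<Sum>c\<in>B. householder_on B w c a * householder_on B w c b) = ?\<delta> a b"
    by simp
qed

lemma matvec_on_householder_on:
  assumes "finite B" "supported_on B w" "supported_on B v"
  shows "matvec_on B (householder_on B w) v = (\<lambda>a. v a - 2 * inner_on B w v / inner_on B w w * w a)"
proof
  fix a
  show "matvec_on B (householder_on B w) v a = v a - 2 * inner_on B w v / inner_on B w w * w a"
  proof (cases "a \<in> B")
    case True
    have "householder_on B w a b * v b
        = (if a = b then v b else 0) - 2 * w a / inner_on B w w * (w b * v b)" for b
      unfolding householder_on_def by (simp add: left_diff_distrib)
    then have "(\<Sum>b\<in>B. householder_on B w a b * v b)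
        = (\<Sum>b\<in>B. (if a = b then v b else 0)) - 2 * w a / inner_on B w w * (\<Sum>b\<in>B. w b * v b)"
      by (simp add: sum_subtractf sum_distrib_left)
    then show ?thesis
      using True assms(1) by (simp add: matvec_on_def inner_on_def)
  next
    case False
    then show ?thesis using assms(2,3) by (simp add: matvec_on_def supported_on_def)
  qed
qed

lemma householder_reflects:
  assumes "finite B" "supported_on B y" "supported_on B v"
    and "inner_on B y y = inner_on B v v" "y \<noteq> v"
  defines "w \<equiv> \<lambda>a. y a - v a"
  shows "orthogonal_on B (householder_on B w)"
    and "matvec_on B (householder_on B w) y = v"
    and "supported_on B x \<Longrightarrow> inner_on B y x = inner_on B v x
      \<Longrightarrow> matvec_on B (householder_on B w) x = x"
proof -
  have w_supp: "supported_on B w"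
    using assms(2,3) unfolding w_def supported_on_def by simp
  obtain a where "w a \<noteq> 0"
    using \<open>y \<noteq> v\<close> unfolding w_def by (auto simp: fun_eq_iff)
  then have w_pos: "0 < inner_on B w w"
    using inner_on_self_pos[OF assms(1) w_supp] by blast
  then show "orthogonal_on B (householder_on B w)"
    using orthogonal_on_householder_on[OF assms(1)] by simp
  have "inner_on B w w = 2 * inner_on B w y"
    using assms(4) unfolding w_def inner_on_diff_left inner_on_diff_right
    by (simp add: inner_on_commute[of B v y])
  then have "2 * inner_on B w y / inner_on B w w = 1"
    using w_pos by simp
  then show "matvec_on B (householder_on B w) y = v"
    unfolding matvec_on_householder_on[OF assms(1) w_supp assms(2)] by (simp add: w_def)
  assume "supported_on B x" "inner_on B y x = inner_on B v x"
  then have "inner_on B w x = 0"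
    unfolding w_def inner_on_diff_left by simp
  then show "matvec_on B (householder_on B w) x = x"
    unfolding matvec_on_householder_on[OF assms(1) w_supp \<open>supported_on B x\<close>] by simp
qed

text \<open>Composing reflections, each new pair is matched without disturbing the earlier ones.\<close>

lemma orthogonal_on_exists_gram_eq:
  assumes "finite B" "finite I"
    and "\<And>i. i \<in> I \<Longrightarrow> supported_on B (u i) \<and> supported_on B (v i)"
    and "\<And>i j. i \<in> I \<Longrightarrow> j \<in> I \<Longrightarrow> inner_on B (u i) (u j) = inner_on B (v i) (v j)"
  shows "\<exists>M. orthogonal_on B M \<and> (\<forall>i\<in>I. matvec_on B M (u i) = v i)"
  using assms(2-)
proof (induction I rule: finite_induct)
  case empty
  show ?case using orthogonal_on_id[OF assms(1)] by blast
next
  case (insert i I)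
  then obtain M where M: "orthogonal_on B M" "\<forall>j\<in>I. matvec_on B M (u j) = v j"
    by (metis insert_iff)
  define y where "y = matvec_on B M (u i)"
  have y_supp: "supported_on B y"
    unfolding y_def by (rule supported_on_matvec_on)
  have y_norm: "inner_on B y y = inner_on B (v i) (v i)"
    using insert.prems(2)[of i i] inner_on_matvec_on[OF assms(1) M(1)] by (simp add: y_def)
  have y_inner: "inner_on B y (v j) = inner_on B (v i) (v j)" if "j \<in> I" for j
  proof -
    have "inner_on B y (v j) = inner_on B (matvec_on B M (u i)) (matvec_on B M (u j))"
      using M(2) that by (simp add: y_def)
    also have "\<dots> = inner_on B (v i) (v j)"
      using insert.prems(2)[of i j] that inner_on_matvec_on[OF assms(1) M(1)] by simp
    finally show ?thesis .
  qed
  show ?case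
  proof (cases "y = v i")
    case True
    then show ?thesis using M y_def by auto
  next
    case False
    define H where "H = householder_on B (\<lambda>a. y a - v i a)"
    have v_supp: "supported_on B (v j)" if "j \<in> insert i I" for j
      using insert.prems(1) that by blast
    have H: "orthogonal_on B H" "matvec_on B H y = v i"
      and H_fix: "\<And>j. j \<in> I \<Longrightarrow> matvec_on B H (v j) = v j"
      using householder_reflects[OF assms(1) y_supp v_supp y_norm False] y_inner v_supp
      unfolding H_def by auto
    show ?thesis
    proof (intro exI conjI ballI)
      show "orthogonal_on B (matmul_on B H M)"
        by (rule orthogonal_on_matmul_on[OF assms(1) H(1) M(1)])
      fix j assume "j \<in> insert i I"
      then show "matvec_on B (matmul_on B H M) (u j) = v j"
        using H H_fix M(2) by (auto simp: matvec_on_matmul_on[OF assms(1)] y_def)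
    qed
  qed
qed

section \<open>Labelled coordinates and the phase oracle\<close>

definition pushforward :: "('l \<Rightarrow> 'a) \<Rightarrow> ('l \<Rightarrow> real) \<Rightarrow> 'a \<Rightarrow> real" where
  "pushforward lab c a = (if a \<in> range lab then c (inv lab a) else 0)"

lemma pushforward_apply: "inj lab \<Longrightarrow> pushforward lab c (lab l) = c l"
  unfolding pushforward_def by simp

lemma pushforward_outside_range: "a \<notin> range lab \<Longrightarrow> pushforward lab c a = 0"
  unfolding pushforward_def by simp

lemma pushforward_outside:
  assumes "inj lab" "a \<notin> lab ` L" "\<And>l. l \<notin> L \<Longrightarrow> c l = 0"
  shows "pushforward lab c a = 0"
proof (cases "a \<in> range lab")
  case True
  then obtain l where "a = lab l" by blast
  with assms show ?thesis by (auto simp: pushforward_apply)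
qed (simp add: pushforward_outside_range)

lemma supported_on_pushforward:
  assumes "inj lab" "lab ` L \<subseteq> B" "\<And>l. l \<notin> L \<Longrightarrow> c l = 0"
  shows "supported_on B (pushforward lab c)"
  unfolding supported_on_def
proof (intro allI impI)
  fix a assume "a \<notin> B"
  then have "a \<notin> lab ` L" using assms(2) by blast
  then show "pushforward lab c a = 0" by (rule pushforward_outside[OF assms(1) _ assms(3)])
qed

lemma inner_on_pushforward:
  assumes "finite B" "finite L" "inj lab" "lab ` L \<subseteq> B" "\<And>l. l \<notin> L \<Longrightarrow> c l = 0"
  shows "inner_on B (pushforward lab c) (pushforward lab c') = (\<Sum>l\<in>L. c l * c' l)"
proof -
  have "pushforward lab c a = 0" if "a \<notin> lab ` L" for a
    using pushforward_outside[OF assms(3) that assms(5)] .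
  then have "inner_on B (pushforward lab c) (pushforward lab c')
      = (\<Sum>a\<in>lab ` L. pushforward lab c a * pushforward lab c' a)"
    unfolding inner_on_def by (intro sum.mono_neutral_right[OF assms(1,4)]) simp
  also have "\<dots> = (\<Sum>l\<in>L. c l * c' l)"
    using assms(3) by (simp add: sum.reindex inj_on_subset pushforward_apply)
  finally show ?thesis .
qed

definition sign_oracle :: "nat \<Rightarrow> nat \<Rightarrow> (nat \<times> nat \<Rightarrow> real) \<Rightarrow> nat \<times> nat \<Rightarrow> real" where
  "sign_oracle N f w = (\<lambda>(z, i). (if i < N \<and> f \<le> i then -1 else 1) * w (z, i))"

lemma sign_oracle_apply: "sign_oracle N f w a = (if snd a < N \<and> f \<le> snd a then -1 else 1) * w a"
  by (cases a) (simp add: sign_oracle_def)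

lemma sign_oracle_pushforward:
  assumes "inj lab"
  shows "sign_oracle N f (pushforward lab c)
    = pushforward lab (\<lambda>l. (if snd (lab l) < N \<and> f \<le> snd (lab l) then -1 else 1) * c l)"
proof
  fix a
  show "sign_oracle N f (pushforward lab c) a
    = pushforward lab (\<lambda>l. (if snd (lab l) < N \<and> f \<le> snd (lab l) then -1 else 1) * c l) a"
  proof (cases "a \<in> range lab")
    case True
    then obtain l where "a = lab l" by blast
    then show ?thesis unfolding sign_oracle_apply by (simp add: pushforward_apply[OF assms])
  qed (simp add: sign_oracle_apply pushforward_outside_range)
qed

lemma supported_on_sign_oracle: "supported_on B w \<Longrightarrow> supported_on B (sign_oracle N f w)"
  unfolding supported_on_def by (simp add: sign_oracle_apply)

lemma unitary_on_of_real: "orthogonal_on B M \<Longrightarrow> unitary_on B (\<lambda>a b. complex_of_real (M a b))"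
  unfolding unitary_on_def orthogonal_on_def by (simp flip: of_real_mult of_real_sum)

lemma apply_mat_of_real:
  assumes "supported_on B w"
  shows "apply_mat B (\<lambda>a b. complex_of_real (M a b)) (\<lambda>a. complex_of_real (w a))
    = (\<lambda>a. complex_of_real (matvec_on B M w a))"
  using assms unfolding apply_mat_def matvec_on_def supported_on_def
  by (auto simp flip: of_real_mult of_real_sum)

lemma phase_oracle_of_real:
  assumes "\<forall>i<N. x i \<longleftrightarrow> f \<le> i"
  shows "phase_oracle N x (\<lambda>a. complex_of_real (w a)) = (\<lambda>a. complex_of_real (sign_oracle N f w a))"
  using assms by (auto simp: fun_eq_iff phase_oracle_def sign_oracle_def)

lemma monotone_input_first_one:
  assumes "0 < N" "monotone_input N x"
  shows "first_one N x < N" and "\<forall>i<N. x i \<longleftrightarrow> first_one N x \<le> i"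
proof -
  have "N - 1 < N \<and> x (N - 1)"
    using assms unfolding monotone_input_def by simp
  then have first: "first_one N x < N \<and> x (first_one N x)"
    unfolding first_one_def by (rule LeastI)
  then show "first_one N x < N" ..
  show "\<forall>i<N. x i \<longleftrightarrow> first_one N x \<le> i"
  proof (intro allI impI iffI)
    fix i assume "i < N" "x i"
    then show "first_one N x \<le> i"
      unfolding first_one_def by (simp add: Least_le)
  next
    fix i assume "i < N" "first_one N x \<le> i"
    then show "x i"
      using first assms(2) unfolding monotone_input_def by blast
  qed
qed

section \<open>From a search kernel to an exact algorithm\<close>

definition query_sign :: "nat \<Rightarrow> nat \<Rightarrow> real" where
  "query_sign b J = (if b \<le> J then -1 else 1)"

definition flipped :: "(nat \<Rightarrow> nat \<times> nat \<Rightarrow> real) \<Rightarrow> nat \<Rightarrow> nat \<times> nat \<Rightarrow> real" where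
  "flipped u b = (\<lambda>(J, k). query_sign b J * u b (J, k))"

definition gram :: "nat \<Rightarrow> nat \<Rightarrow> (nat \<Rightarrow> nat \<times> nat \<Rightarrow> real) \<Rightarrow> nat \<Rightarrow> nat \<Rightarrow> real" where
  "gram n m u b c = (\<Sum>jk\<in>{..<n} \<times> {..<m}. u b jk * u c jk)"

text \<open>v s b is the state before query s + 1 of a t-query algorithm determining a base-n digit
  b; its coordinate (J, k) queries the last position of the J-th of n consecutive blocks, which
  detects whether b \<le> J.\<close>

definition search_kernel :: "nat \<Rightarrow> nat \<Rightarrow> nat \<Rightarrow> (nat \<Rightarrow> nat \<Rightarrow> nat \<times> nat \<Rightarrow> real) \<Rightarrow> bool" where
  "search_kernel n t m v \<longleftrightarrow> 0 < t \<and> (\<forall>b<n. \<forall>c<n.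
     gram n m (v 0) b c = 1 \<and>
     (\<forall>s. Suc s < t \<longrightarrow> gram n m (flipped (v s)) b c = gram n m (v (Suc s)) b c) \<and>
     gram n m (flipped (v (t - 1))) b c = (if b = c then 1 else 0))"

locale kernel_search =
  fixes n t m :: nat and v :: "nat \<Rightarrow> nat \<Rightarrow> nat \<times> nat \<Rightarrow> real" and N R :: nat
  assumes kernel: "search_kernel n t m v"
    and n_pos: "0 < n" and N_pos: "0 < N" and N_le: "N \<le> n ^ R"
begin

definition T :: nat where
  "T = t * R"

definition level :: "nat \<Rightarrow> nat" where
  "level q = q div t"

definition stage :: "nat \<Rightarrow> nat" where
  "stage q = q mod t"

definition prefix :: "nat \<Rightarrow> nat \<Rightarrow> nat" where
  "prefix r f = f div n ^ (R - r)"

definition digit :: "nat \<Rightarrow> nat \<Rightarrow> nat" where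
  "digit r f = prefix (Suc r) f mod n"

definition query :: "nat \<Rightarrow> nat \<Rightarrow> nat \<Rightarrow> nat" where
  "query r p J = min ((n * p + J + 1) * n ^ (R - Suc r) - 1) (N - 1)"

text \<open>The coordinate (J, k) of the state after q queries with prefix p becomes the basis state
  |z; i> with z encoding (q, p, J, k), shifted to keep z = 0 free for the initial state, and with
  i the position that coordinate queries.\<close>

definition label :: "nat \<times> nat \<times> nat \<times> nat \<Rightarrow> nat \<times> nat" where
  "label = (\<lambda>(q, p, J, k).
     (Suc (prod_encode (q, prod_encode (p, prod_encode (J, k)))), query (level q) p J))"

definition block :: "nat \<Rightarrow> (nat \<times> nat) set" where
  "block q = (if q < T then {..<n} \<times> {..<m} else {(0, 0)})"

definition local_state :: "nat \<Rightarrow> nat \<Rightarrow> nat \<times> nat \<Rightarrow> real" where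
  "local_state q f = (if q < T then v (stage q) (digit (level q) f) else (\<lambda>_. 1))"

definition support :: "nat \<Rightarrow> nat \<Rightarrow> (nat \<times> nat \<times> nat \<times> nat) set" where
  "support q f = {q} \<times> {prefix (level q) f} \<times> block q"

definition coeff :: "nat \<Rightarrow> nat \<Rightarrow> nat \<times> nat \<times> nat \<times> nat \<Rightarrow> real" where
  "coeff q f l = (if l \<in> support q f then local_state q f (snd (snd l)) else 0)"

definition state :: "nat \<Rightarrow> nat \<Rightarrow> nat \<times> nat \<Rightarrow> real" where
  "state q f = pushforward label (coeff q f)"

definition basis :: "(nat \<times> nat) set" where
  "basis = insert (0, 0) (label ` ({..T} \<times> {..<n ^ R} \<times> ({..<n} \<times> {..<m} \<union> {(0, 0)})))"

definition answer :: "nat \<times> nat \<Rightarrow> nat" where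
  "answer a = fst (prod_decode (snd (prod_decode (fst a - 1))))"

lemma t_pos: "0 < t"
  using kernel unfolding search_kernel_def by simp

lemma level_T: "level T = R"
  unfolding level_def T_def using t_pos by simp

lemma level_less: "q < T \<Longrightarrow> level q < R"
  unfolding level_def T_def using t_pos by (simp add: div_less_iff_less_mult mult.commute)

lemma inj_label: "inj label"
  unfolding inj_def label_def by auto

lemma label_ne_origin: "label l \<noteq> (0, 0)"
  unfolding label_def by (simp split: prod.split)

lemma answer_label: "answer (label (q, p, jk)) = p"
  unfolding answer_def label_def by (simp split: prod.split)

lemma finite_basis: "finite basis"
  unfolding basis_def by simp

lemma origin_in_basis: "(0, 0) \<in> basis"
  unfolding basis_def by simp

lemma prefix_less: "f < N \<Longrightarrow> prefix r f < n ^ R"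
  using N_le div_le_dividend[of f "n ^ (R - r)"] unfolding prefix_def by linarith

lemma prefix_zero: "f < N \<Longrightarrow> prefix 0 f = 0"
  using N_le unfolding prefix_def by simp

lemma prefix_R: "prefix R f = f"
  unfolding prefix_def by simp

lemma prefix_eq_div: "r < R \<Longrightarrow> prefix r f = prefix (Suc r) f div n"
proof -
  assume "r < R"
  then have "n ^ (R - r) = n ^ (R - Suc r) * n"
    by (simp flip: power_Suc2 add: Suc_diff_Suc)
  then show ?thesis
    unfolding prefix_def by (simp add: div_mult2_eq)
qed

lemma same_prefix_Suc:
  assumes "r < R"
  shows "prefix (Suc r) f = prefix (Suc r) g \<longleftrightarrow> prefix r f = prefix r g \<and> digit r f = digit r g"
  unfolding prefix_eq_div[OF assms] digit_def by (metis div_mult_mod_eq)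

text \<open>The query for block J at level r reads the last position of the J-th sub-block; the
  clamp to N - 1 is harmless because x (N - 1) holds for every admissible input.\<close>

lemma query_iff_digit:
  assumes "r < R" "f < N"
  shows "query r (prefix r f) J < N" and "f \<le> query r (prefix r f) J \<longleftrightarrow> digit r f \<le> J"
proof -
  show "query r (prefix r f) J < N"
    unfolding query_def using N_pos by simp
  define M where "M = n ^ (R - Suc r)"
  have "0 < M" unfolding M_def using n_pos by simp
  have digits: "f div M = n * prefix r f + digit r f"
    unfolding prefix_eq_div[OF assms(1)] digit_def M_def prefix_def[of "Suc r"] by simp
  have "f \<le> (n * prefix r f + J + 1) * M - 1 \<longleftrightarrow> f < (n * prefix r f + J + 1) * M"
    using \<open>0 < M\<close> by (cases "(n * prefix r f + J + 1) * M") auto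
  also have "\<dots> \<longleftrightarrow> f div M < n * prefix r f + J + 1"
    using \<open>0 < M\<close> by (simp add: div_less_iff_less_mult)
  also have "\<dots> \<longleftrightarrow> digit r f \<le> J"
    unfolding digits by (simp add: less_Suc_eq_le)
  finally show "f \<le> query r (prefix r f) J \<longleftrightarrow> digit r f \<le> J"
    unfolding query_def M_def using assms(2) by auto
qed

lemma finite_support: "finite (support q f)"
  unfolding support_def block_def by simp

lemma label_support_subset: "q \<le> T \<Longrightarrow> f < N \<Longrightarrow> label ` support q f \<subseteq> basis"
  unfolding support_def block_def basis_def using prefix_less by auto

lemma supported_on_state: "q \<le> T \<Longrightarrow> f < N \<Longrightarrow> supported_on basis (state q f)"
  unfolding state_def coeff_def
  by (rule supported_on_pushforward[OF inj_label label_support_subset]) auto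

lemma state_origin: "state q f (0, 0) = 0"
  unfolding state_def using label_ne_origin by (metis pushforward_outside_range rangeE)

lemma inner_on_basis:
  assumes "q \<le> T" "f < N" "\<And>l. l \<notin> support q f \<Longrightarrow> c l = 0"
  shows "inner_on basis (pushforward label c) (pushforward label c')
    = (\<Sum>jk\<in>block q. c (q, prefix (level q) f, jk) * c' (q, prefix (level q) f, jk))"
proof -
  have "support q f = (\<lambda>jk. (q, prefix (level q) f, jk)) ` block q"
    unfolding support_def by auto
  moreover have "inj_on (\<lambda>jk. (q, prefix (level q) f, jk)) (block q)"
    by (simp add: inj_on_def)
  ultimately show ?thesis
    using inner_on_pushforward[OF finite_basis finite_support inj_label
        label_support_subset[OF assms(1,2)] assms(3)]
    by (simp add: sum.reindex)
qed

definition oracle_factor :: "nat \<Rightarrow> nat \<times> nat \<times> nat \<times> nat \<Rightarrow> real" where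
  "oracle_factor f l = (if snd (label l) < N \<and> f \<le> snd (label l) then -1 else 1)"

lemma sign_oracle_state:
  "sign_oracle N f (state q f) = pushforward label (\<lambda>l. oracle_factor f l * coeff q f l)"
  unfolding state_def oracle_factor_def by (rule sign_oracle_pushforward[OF inj_label])

lemma oracle_factor_support:
  assumes "q < T" "f < N"
  shows "oracle_factor f (q, prefix (level q) f, J, k) = query_sign (digit (level q) f) J"
  using query_iff_digit[OF level_less[OF assms(1)] assms(2)]
  unfolding oracle_factor_def query_sign_def label_def by simp

lemma digit_less: "digit r f < n"
  unfolding digit_def using n_pos by simp

lemma kernel_initial: "b < n \<Longrightarrow> c < n \<Longrightarrow> gram n m (v 0) b c = 1"
  using kernel unfolding search_kernel_def by blast

lemma kernel_step:
  "b < n \<Longrightarrow> c < n \<Longrightarrow> Suc s < t \<Longrightarrow> gram n m (flipped (v s)) b c = gram n m (v (Suc s)) b c"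
  using kernel unfolding search_kernel_def by blast

lemma kernel_final:
  "b < n \<Longrightarrow> c < n \<Longrightarrow> gram n m (flipped (v (t - 1))) b c = (if b = c then 1 else 0)"
  using kernel unfolding search_kernel_def by blast

lemma level_stage_Suc:
  "level (Suc q) = (if Suc (stage q) < t then level q else Suc (level q))"
  "stage (Suc q) = (if Suc (stage q) < t then Suc (stage q) else 0)"
  using mod_less_divisor[OF t_pos, of q]
  unfolding level_def stage_def by (auto simp: div_Suc mod_Suc)

lemma inner_state:
  assumes "q \<le> T" "f < N" "g < N"
  shows "inner_on basis (state q f) (state q g)
    = (if prefix (level q) f = prefix (level q) g
       then (if q < T then gram n m (v (stage q)) (digit (level q) f) (digit (level q) g) else 1)
       else 0)"
proof -
  have "inner_on basis (state q f) (state q g)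
      = (\<Sum>jk\<in>block q. local_state q f jk
          * (if prefix (level q) f = prefix (level q) g then local_state q g jk else 0))"
    unfolding state_def
    by (subst inner_on_basis[OF assms(1,2)]) (auto simp: coeff_def support_def intro!: sum.cong)
  then show ?thesis
    by (auto simp: block_def local_state_def gram_def)
qed

lemma inner_sign_oracle_state:
  assumes "q < T" "f < N" "g < N"
  shows "inner_on basis (sign_oracle N f (state q f)) (sign_oracle N g (state q g))
    = (if prefix (level q) f = prefix (level q) g
       then gram n m (flipped (v (stage q))) (digit (level q) f) (digit (level q) g) else 0)"
proof -
  let ?p = "prefix (level q) f"
  have "inner_on basis (sign_oracle N f (state q f)) (sign_oracle N g (state q g))
      = (\<Sum>jk\<in>{..<n} \<times> {..<m}. oracle_factor f (q, ?p, jk) * coeff q f (q, ?p, jk)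
          * (oracle_factor g (q, ?p, jk) * coeff q g (q, ?p, jk)))"
    unfolding sign_oracle_state using assms(1)
    by (subst inner_on_basis[OF less_imp_le[OF assms(1)] assms(2)]) (simp_all add: coeff_def block_def)
  also have "\<dots> = (if ?p = prefix (level q) g
      then gram n m (flipped (v (stage q))) (digit (level q) f) (digit (level q) g) else 0)"
  proof (cases "?p = prefix (level q) g")
    case True
    have "oracle_factor f (q, ?p, J, k) * coeff q f (q, ?p, J, k)
        * (oracle_factor g (q, ?p, J, k) * coeff q g (q, ?p, J, k))
        = flipped (v (stage q)) (digit (level q) f) (J, k)
          * flipped (v (stage q)) (digit (level q) g) (J, k)"
      if "J < n" "k < m" for J k
      using that assms(1) oracle_factor_support[OF assms(1,2)] oracle_factor_support[OF assms(1,3)]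
      unfolding True coeff_def support_def block_def local_state_def flipped_def by simp
    then show ?thesis
      using True unfolding gram_def by (auto intro!: sum.cong)
  next
    case False
    then show ?thesis by (simp add: coeff_def support_def)
  qed
  finally show ?thesis .
qed

lemma inner_on_basis_disjoint:
  assumes "q \<le> T" "f < N" "q \<noteq> q'"
    and "\<And>l. l \<notin> support q f \<Longrightarrow> c l = 0" "\<And>l. l \<notin> support q' g \<Longrightarrow> c' l = 0"
  shows "inner_on basis (pushforward label c) (pushforward label c') = 0"
  using inner_on_basis[OF assms(1,2,4), where c'=c'] assms(3,5) by (simp add: support_def)

text \<open>A round of t queries refines the prefix by one digit: after its last query the states
  of different digits are orthogonal, which is the Gram matrix the next round starts from.\<close>

lemma inner_sign_oracle_state_Suc:
  assumes "q < T" "f < N" "g < N"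
  shows "inner_on basis (sign_oracle N f (state q f)) (sign_oracle N g (state q g))
    = inner_on basis (state (Suc q) f) (state (Suc q) g)"
proof (cases "Suc (stage q) < t")
  case True
  have "Suc q = t * level q + Suc (stage q)"
    unfolding level_def stage_def by simp
  also have "\<dots> < t * Suc (level q)"
    using True by simp
  also have "\<dots> \<le> T"
    unfolding T_def by (intro mult_le_mono2) (use level_less[OF assms(1)] in simp)
  finally have "Suc q < T" .
  then show ?thesis
    using True inner_sign_oracle_state[OF assms] inner_state[of "Suc q" f g] assms
    by (simp add: level_stage_Suc kernel_step digit_less)
next
  case False
  then have "stage q = t - 1"
    using mod_less_divisor[OF t_pos, of q] unfolding stage_def by linarith
  then have "inner_on basis (sign_oracle N f (state q f)) (sign_oracle N g (state q g))
      = (if prefix (level q) f = prefix (level q) g \<and> digit (level q) f = digit (level q) g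
         then 1 else 0)"
    using inner_sign_oracle_state[OF assms] kernel_final[OF digit_less digit_less] by simp
  also have "\<dots> = (if prefix (Suc (level q)) f = prefix (Suc (level q)) g then 1 else 0)"
    using same_prefix_Suc[OF level_less[OF assms(1)]] by simp
  also have "\<dots> = inner_on basis (state (Suc q) f) (state (Suc q) g)"
    using inner_state[of "Suc q" f g] assms False
    by (simp add: level_stage_Suc kernel_initial digit_less)
  finally show ?thesis .
qed

definition origin :: "nat \<times> nat \<Rightarrow> real" where
  "origin a = (if a = (0, 0) then 1 else 0)"

definition input :: "nat \<Rightarrow> nat \<Rightarrow> nat \<times> nat \<Rightarrow> real" where
  "input q f = (if q = 0 then origin else sign_oracle N f (state (q - 1) f))"

lemma inner_on_origin: "inner_on basis origin w = w (0, 0)"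
  unfolding inner_on_def origin_def using finite_basis origin_in_basis
  by (simp add: if_distrib[of "\<lambda>x. x * _"] cong: if_cong)

lemma supported_on_input: "q \<le> T \<Longrightarrow> f < N \<Longrightarrow> supported_on basis (input q f)"
  unfolding input_def supported_on_def origin_def
  using origin_in_basis supported_on_sign_oracle[OF supported_on_state, of "q - 1" f]
  by (auto simp: supported_on_def)

lemma inner_state_ne:
  assumes "q \<le> T" "q \<noteq> q'" "f < N"
  shows "inner_on basis (state q f) (state q' g) = 0"
    and "inner_on basis (sign_oracle N f (state q f)) (sign_oracle N g (state q' g)) = 0"
proof -
  show "inner_on basis (state q f) (state q' g) = 0"
    unfolding state_def
    by (rule inner_on_basis_disjoint[OF assms(1,3,2), where g = g]) (simp_all add: coeff_def)
  show "inner_on basis (sign_oracle N f (state q f)) (sign_oracle N g (state q' g)) = 0"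
    unfolding sign_oracle_state
    by (rule inner_on_basis_disjoint[OF assms(1,3,2), where g = g]) (simp_all add: coeff_def)
qed

lemma inner_input:
  assumes "q \<le> T" "q' \<le> T" "f < N" "g < N"
  shows "inner_on basis (input q f) (input q' g) = inner_on basis (state q f) (state q' g)"
proof (cases q)
  case 0
  show ?thesis
  proof (cases q')
    case 0
    have "inner_on basis (state 0 f) (state 0 g) = 1"
      using inner_state[of 0 f g] assms(3,4) prefix_zero kernel_initial digit_less
      by (simp add: level_def stage_def)
    then show ?thesis
      using \<open>q = 0\<close> \<open>q' = 0\<close> by (simp add: input_def inner_on_origin origin_def)
  next
    case (Suc q0)
    then show ?thesis
      using \<open>q = 0\<close> inner_state_ne(1)[of 0 q' f g] assms
      by (simp add: input_def inner_on_origin sign_oracle_apply state_origin)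
  qed
next
  case (Suc q0)
  show ?thesis
  proof (cases q')
    case 0
    then show ?thesis
      using \<open>q = Suc q0\<close> inner_state_ne(1)[of q q' f g] assms
      by (simp add: input_def inner_on_origin inner_on_commute[of basis _ origin]
          sign_oracle_apply state_origin)
  next
    case (Suc q0')
    then show ?thesis
      using \<open>q = Suc q0\<close> assms inner_sign_oracle_state_Suc[of q0 f g]
        inner_state_ne[of q0 q0' f g] inner_state_ne(1)[of q q' f g]
      by (cases "q0 = q0'") (simp_all add: input_def)
  qed
qed

lemma exists_orthogonal_on_input:
  "\<exists>M. orthogonal_on basis M \<and> (\<forall>q\<le>T. \<forall>f<N. matvec_on basis M (input q f) = state q f)"
proof -
  have "\<exists>M. orthogonal_on basis M \<and> (\<forall>i\<in>{..T} \<times> {..<N}.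
      matvec_on basis M (case i of (q, f) \<Rightarrow> input q f) = (case i of (q, f) \<Rightarrow> state q f))"
    by (rule orthogonal_on_exists_gram_eq[OF finite_basis])
      (auto simp: supported_on_input supported_on_state inner_input)
  then show ?thesis by auto
qed

lemma run_state:
  assumes M: "orthogonal_on basis M" "\<forall>q\<le>T. \<forall>f<N. matvec_on basis M (input q f) = state q f"
    and x: "\<forall>i<N. x i \<longleftrightarrow> f \<le> i" and "f < N" and "q \<le> T"
  defines "U \<equiv> \<lambda>a b. complex_of_real (M a b)"
  shows "((apply_mat basis U \<circ> phase_oracle N x) ^^ q) (apply_mat basis U (ket (0, 0)))
    = (\<lambda>a. complex_of_real (state q f a))"
  using \<open>q \<le> T\<close>
proof (induction q)
  case 0
  have "ket (0, 0) = (\<lambda>a. complex_of_real (origin a))"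
    unfolding ket_def origin_def by auto
  moreover have "matvec_on basis M (input 0 f) = state 0 f"
    using M(2) \<open>f < N\<close> by simp
  ultimately show ?case
    using supported_on_input[of 0 f] \<open>f < N\<close>
    by (simp add: U_def apply_mat_of_real input_def)
next
  case (Suc q)
  have "matvec_on basis M (input (Suc q) f) = state (Suc q) f"
    using M(2) \<open>f < N\<close> Suc.prems by simp
  then show ?case
    using Suc \<open>f < N\<close> supported_on_sign_oracle[OF supported_on_state, of q f]
    by (simp add: U_def phase_oracle_of_real[OF x] apply_mat_of_real input_def)
qed

lemma state_final_nonzero: "state T f a \<noteq> 0 \<Longrightarrow> a = label (T, f, 0, 0)"
  using pushforward_outside[OF inj_label, of a "support T f" "coeff T f"]
  by (auto simp: state_def coeff_def support_def block_def level_T prefix_R)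

theorem exact_algorithm:
  "\<exists>B U out. finite B \<and> (0, 0) \<in> B \<and> unitary_on B U \<and>
     exact_on B U N T out (monotone_input N) (first_one N)"
proof -
  obtain M where M: "orthogonal_on basis M" "\<forall>q\<le>T. \<forall>f<N. matvec_on basis M (input q f) = state q f"
    using exists_orthogonal_on_input by blast
  let ?U = "\<lambda>a b. complex_of_real (M a b)"
  have "exact_on basis ?U N T answer (monotone_input N) (first_one N)"
    unfolding exact_on_def
  proof (intro allI impI)
    fix x a
    assume "monotone_input N x" and "run basis ?U N x T a \<noteq> 0"
    moreover have "run basis ?U N x T = (\<lambda>a. complex_of_real (state T (first_one N x) a))"
      unfolding run_def
      using run_state[OF M _ _ order_refl] monotone_input_first_one[OF N_pos \<open>monotone_input N x\<close>]
      by blast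
    ultimately have "state T (first_one N x) a \<noteq> 0"
      by simp
    then show "answer a = first_one N x"
      using state_final_nonzero answer_label by metis
  qed
  then show ?thesis
    using finite_basis origin_in_basis unitary_on_of_real[OF M(1)] by blast
qed

end

theorem search_kernel_exact_algorithm:
  assumes "search_kernel n t m v" "0 < n" "0 < N" "N \<le> n ^ R"
  shows "\<exists>B U out. finite B \<and> (0, 0) \<in> B \<and> unitary_on B U \<and>
    exact_on B U N (t * R) out (monotone_input N) (first_one N)"
proof -
  interpret kernel_search n t m v N R
    using assms by unfold_locales
  show ?thesis
    using exact_algorithm unfolding T_def .
qed

section \<open>Translation-invariant kernels\<close>

definition aperiodic_autocorr :: "nat \<Rightarrow> (nat \<Rightarrow> real) \<Rightarrow> nat \<Rightarrow> real" where
  "aperiodic_autocorr n h d = (\<Sum>e<n - d. h e * h (e + d))"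

definition periodic_autocorr :: "nat \<Rightarrow> (nat \<Rightarrow> real) \<Rightarrow> nat \<Rightarrow> real" where
  "periodic_autocorr n h d = (\<Sum>e<n. h e * h ((e + d) mod n))"

definition negacyclic_autocorr :: "nat \<Rightarrow> (nat \<Rightarrow> real) \<Rightarrow> nat \<Rightarrow> real" where
  "negacyclic_autocorr n h d = (\<Sum>e<n. (if e + d < n then 1 else -1) * h e * h ((e + d) mod n))"

lemma sum_lessThan_split:
  fixes g :: "nat \<Rightarrow> real"
  assumes "d \<le> n"
  shows "(\<Sum>e<n. g e) = (\<Sum>e<n - d. g e) + (\<Sum>e<d. g (e + (n - d)))"
proof -
  have "(\<Sum>e<n. g e) = (\<Sum>e\<in>{0..<n - d}. g e) + (\<Sum>e\<in>{n - d..<n}. g e)"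
    using assms by (simp add: lessThan_atLeast0 sum.atLeastLessThan_concat)
  also have "(\<Sum>e\<in>{n - d..<n}. g e) = (\<Sum>e\<in>{0..<d}. g (e + (n - d)))"
    using sum.shift_bounds_nat_ivl[of g 0 "n - d" d] assms by simp
  finally show ?thesis
    by (simp add: lessThan_atLeast0)
qed

lemma aperiodic_autocorr_n: "aperiodic_autocorr n h n = 0"
  unfolding aperiodic_autocorr_def by simp

lemma periodic_autocorr_aperiodic:
  assumes "d \<le> n"
  shows "periodic_autocorr n h d = aperiodic_autocorr n h d + aperiodic_autocorr n h (n - d)"
proof -
  have "(\<Sum>e<d. h (e + (n - d)) * h ((e + (n - d) + d) mod n)) = aperiodic_autocorr n h (n - d)"
    unfolding aperiodic_autocorr_def using assms by (intro sum.cong) (auto simp: mult.commute)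
  then show ?thesis
    unfolding periodic_autocorr_def sum_lessThan_split[OF assms] aperiodic_autocorr_def
    by (simp add: less_diff_conv)
qed

lemma negacyclic_autocorr_aperiodic:
  assumes "d \<le> n"
  shows "negacyclic_autocorr n h d = aperiodic_autocorr n h d - aperiodic_autocorr n h (n - d)"
proof -
  have "(\<Sum>e<d. (if e + (n - d) + d < n then 1 else -1) * h (e + (n - d)) * h ((e + (n - d) + d) mod n))
      = - aperiodic_autocorr n h (n - d)"
    unfolding aperiodic_autocorr_def using assms
    by (simp add: sum_negf[symmetric] mult.commute)
  then show ?thesis
    unfolding negacyclic_autocorr_def sum_lessThan_split[OF assms] aperiodic_autocorr_def
    by (simp add: less_diff_conv)
qed

lemma sum_rotate:
  fixes g :: "nat \<Rightarrow> real"
  assumes "0 < n"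
  shows "(\<Sum>J<n. g ((J + s) mod n)) = (\<Sum>e<n. g e)"
proof (rule sum.reindex_bij_witness[where i = "\<lambda>e. (e + (n - s mod n)) mod n" and j = "\<lambda>J. (J + s) mod n"])
  have wrap: "a + s + (n - s mod n) = a + n + (s div n) * n" for a
    using mod_less_divisor[OF assms, of s] div_mult_mod_eq[of s n] by linarith
  fix a assume "a \<in> {..<n}"
  have "((a + s) mod n + (n - s mod n)) mod n = (a + s + (n - s mod n)) mod n"
    by (simp add: mod_add_left_eq)
  also have "\<dots> = a" using \<open>a \<in> {..<n}\<close> wrap by simp
  finally show "((a + s) mod n + (n - s mod n)) mod n = a" .
  have "((a + (n - s mod n)) mod n + s) mod n = (a + (n - s mod n) + s) mod n"
    by (rule mod_add_left_eq)
  also have "(a + (n - s mod n) + s) mod n = (a + s + (n - s mod n)) mod n"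
    by (simp only: ac_simps)
  also have "\<dots> = a" using \<open>a \<in> {..<n}\<close> wrap by simp
  finally show "((a + (n - s mod n)) mod n + s) mod n = a" .
qed (use assms in auto)

definition rotated :: "nat \<Rightarrow> (nat \<Rightarrow> nat \<Rightarrow> real) \<Rightarrow> nat \<Rightarrow> nat \<times> nat \<Rightarrow> real" where
  "rotated n a b = (\<lambda>(J, k). a k ((J + (n - b)) mod n))"

lemma gram_commute: "gram n m u b c = gram n m u c b"
  unfolding gram_def by (simp add: mult.commute)

lemma gram_flipped_flipped: "gram n m (flipped (flipped u)) b c = gram n m u b c"
  unfolding gram_def flipped_def query_sign_def by (intro sum.cong) (auto split: prod.split)

lemma gram_columns: "gram n m u b c = (\<Sum>k<m. \<Sum>J<n. u b (J, k) * u c (J, k))"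
proof -
  have "gram n m u b c = (\<Sum>J<n. \<Sum>k<m. u b (J, k) * u c (J, k))"
    unfolding gram_def sum.cartesian_product by simp
  then show ?thesis by (simp add: sum.swap[of _ "{..<n}"])
qed

lemma rotated_shift:
  assumes "b \<le> c" "c < n" "J < n"
  shows "(J + (n - b)) mod n = ((J + (n - c)) mod n + (c - b)) mod n"
    and "query_sign b J * query_sign c J = (if (J + (n - c)) mod n + (c - b) < n then 1 else -1)"
proof -
  have "J + (n - b) = J + (n - c) + (c - b)" using assms by linarith
  then show "(J + (n - b)) mod n = ((J + (n - c)) mod n + (c - b)) mod n"
    by (simp only: mod_add_left_eq)
  show "query_sign b J * query_sign c J = (if (J + (n - c)) mod n + (c - b) < n then 1 else -1)"
  proof (cases "c \<le> J")
    case True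
    then have "J + (n - c) = (J - c) + n" using assms(2) by linarith
    then have "(J + (n - c)) mod n = J - c" using assms(3) by (simp only: mod_add_self2) simp
    then show ?thesis using True assms by (simp add: query_sign_def)
  next
    case False
    then have "(J + (n - c)) mod n = J + (n - c)" using assms by (intro mod_less) linarith
    then show ?thesis using False assms unfolding query_sign_def by (cases "b \<le> J") auto
  qed
qed

lemma gram_rotated:
  assumes "b \<le> c" "c < n"
  shows "gram n m (rotated n a) b c = (\<Sum>k<m. periodic_autocorr n (a k) (c - b))"
    and "gram n m (flipped (rotated n a)) b c = (\<Sum>k<m. negacyclic_autocorr n (a k) (c - b))"
proof -
  have "n > 0" using assms by simp
  have "(\<Sum>J<n. rotated n a b (J, k) * rotated n a c (J, k)) = periodic_autocorr n (a k) (c - b)"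
    for k
  proof -
    let ?G = "\<lambda>e. a k e * a k ((e + (c - b)) mod n)"
    have "(\<Sum>J<n. rotated n a b (J, k) * rotated n a c (J, k)) = (\<Sum>J<n. ?G ((J + (n - c)) mod n))"
      using rotated_shift(1)[OF assms] by (intro sum.cong) (simp_all add: rotated_def mult.commute)
    also have "\<dots> = (\<Sum>e<n. ?G e)"
      using sum_rotate[OF \<open>n > 0\<close>, where g = ?G and s = "n - c"] by simp
    finally show ?thesis
      unfolding periodic_autocorr_def .
  qed
  then show "gram n m (rotated n a) b c = (\<Sum>k<m. periodic_autocorr n (a k) (c - b))"
    unfolding gram_columns by simp
  have "(\<Sum>J<n. flipped (rotated n a) b (J, k) * flipped (rotated n a) c (J, k))
      = negacyclic_autocorr n (a k) (c - b)" for k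
  proof -
    let ?G = "\<lambda>e. (if e + (c - b) < n then 1 else -1) * a k e * a k ((e + (c - b)) mod n)"
    have "(\<Sum>J<n. flipped (rotated n a) b (J, k) * flipped (rotated n a) c (J, k))
        = (\<Sum>J<n. ?G ((J + (n - c)) mod n))"
      using rotated_shift[OF assms] by (intro sum.cong) (simp_all add: rotated_def flipped_def mult_ac)
    also have "\<dots> = (\<Sum>e<n. ?G e)"
      using sum_rotate[OF \<open>n > 0\<close>, where g = ?G and s = "n - c"] by simp
    finally show ?thesis
      unfolding negacyclic_autocorr_def .
  qed
  then show "gram n m (flipped (rotated n a)) b c = (\<Sum>k<m. negacyclic_autocorr n (a k) (c - b))"
    unfolding gram_columns by simp
qed

lemma gram_rotated_aperiodic:
  assumes "b \<le> c" "c < n"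
  shows "gram n m (rotated n a) b c = (\<Sum>k<m. aperiodic_autocorr n (a k) (c - b))
           + (\<Sum>k<m. aperiodic_autocorr n (a k) (n - (c - b)))"
    and "gram n m (flipped (rotated n a)) b c = (\<Sum>k<m. aperiodic_autocorr n (a k) (c - b))
           - (\<Sum>k<m. aperiodic_autocorr n (a k) (n - (c - b)))"
  using assms
  by (simp_all add: gram_rotated periodic_autocorr_aperiodic negacyclic_autocorr_aperiodic
      sum.distrib sum_subtractf)

text \<open>Before and after the three queries the kernel has the Gram matrices 1, 1 - 2|b - c|/n,
  K |b - c| and the identity. For translation-invariant states these are periodic and negacyclic
  autocorrelations, which the aperiodic ones determine; K must be symmetric because periodic
  autocorrelations are.\<close>

lemma rotation_search_kernel:
  fixes a0 a1 a2 :: "nat \<Rightarrow> nat \<Rightarrow> real" and K :: "nat \<Rightarrow> real"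
  assumes "0 < n"
    and K_sym: "\<And>d. 0 < d \<Longrightarrow> d < n \<Longrightarrow> K (n - d) = K d"
    and a0: "\<And>d. d < n \<Longrightarrow> (\<Sum>k<m. aperiodic_autocorr n (a0 k) d) = 1 - real d / real n"
    and a1: "\<And>d. d < n \<Longrightarrow> (\<Sum>k<m. aperiodic_autocorr n (a1 k) d)
               = (if d = 0 then 1 else (1 - 2 * real d / real n + K d) / 2)"
    and a2: "\<And>d. d < n \<Longrightarrow> (\<Sum>k<m. aperiodic_autocorr n (a2 k) d)
               = (if d = 0 then 1 else K d / 2)"
  shows "search_kernel n 3 m
    (\<lambda>s. if s = 0 then rotated n a0 else if s = 1 then flipped (rotated n a1) else rotated n a2)"
proof -
  define A where "A a d = (\<Sum>k<m. aperiodic_autocorr n (a k) d)" for a d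
  have A_n: "A a n = 0" for a
    unfolding A_def by (simp add: aperiodic_autocorr_n)
  have lags: "A a0 d + A a0 (n - d) = 1
      \<and> A a0 d - A a0 (n - d) = A a1 d - A a1 (n - d)
      \<and> A a1 d + A a1 (n - d) = A a2 d + A a2 (n - d)
      \<and> A a2 d - A a2 (n - d) = (if d = 0 then 1 else 0)" if "d < n" for d
  proof (cases "d = 0")
    case True
    then show ?thesis using A_n a0 a1 a2 \<open>0 < n\<close> unfolding A_def by simp
  next
    case False
    have "real (n - d) = real n - real d" using that by simp
    then have "A a0 (n - d) = real d / real n" "A a1 (n - d) = (2 * real d / real n - 1 + K d) / 2"
      "A a2 (n - d) = K d / 2"
      using False that a0[of "n - d"] a1[of "n - d"] a2[of "n - d"] K_sym[of d] \<open>0 < n\<close>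
      unfolding A_def by (simp_all add: field_simps)
    moreover have "A a0 d = 1 - real d / real n" "A a1 d = (1 - 2 * real d / real n + K d) / 2"
      "A a2 d = K d / 2"
      using False that a0 a1 a2 unfolding A_def by simp_all
    ultimately show ?thesis
      using False by (simp add: field_simps)
  qed
  have gram: "gram n m (rotated n a) b c = A a (c - b) + A a (n - (c - b))"
    "gram n m (flipped (rotated n a)) b c = A a (c - b) - A a (n - (c - b))"
    if "b \<le> c" "c < n" for a b c
    using gram_rotated_aperiodic[OF that] unfolding A_def by simp_all
  have ordered: "gram n m (rotated n a0) b c = 1
      \<and> gram n m (flipped (rotated n a0)) b c = gram n m (flipped (rotated n a1)) b c
      \<and> gram n m (flipped (flipped (rotated n a1))) b c = gram n m (rotated n a2) b c
      \<and> gram n m (flipped (rotated n a2)) b c = (if b = c then 1 else 0)"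
    if "b \<le> c" "c < n" for b c
    using lags[of "c - b"] gram[OF that] that by (simp add: gram_flipped_flipped)
  have all: "gram n m (rotated n a0) b c = 1
      \<and> gram n m (flipped (rotated n a0)) b c = gram n m (flipped (rotated n a1)) b c
      \<and> gram n m (flipped (flipped (rotated n a1))) b c = gram n m (rotated n a2) b c
      \<and> gram n m (flipped (rotated n a2)) b c = (if b = c then 1 else 0)"
    if "b < n" "c < n" for b c
    using ordered[of b c] ordered[of c b] that gram_commute[of n m _ b c] by (cases "b \<le> c") auto
  show ?thesis
    unfolding search_kernel_def numeral_3_eq_3 using all by (auto simp: less_Suc_eq)
qed

lemma aperiodic_autocorr_const: "d \<le> n \<Longrightarrow> aperiodic_autocorr n (\<lambda>_. c) d = real (n - d) * c\<^sup>2"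
  unfolding aperiodic_autocorr_def by (simp add: power2_eq_square)

lemma aperiodic_autocorr_spike:
  assumes "d < n"
  shows "aperiodic_autocorr n (\<lambda>e. if e = 0 then w else 0) d = (if d = 0 then w\<^sup>2 else 0)"
  using assms unfolding aperiodic_autocorr_def
  by (simp add: if_distrib[of "\<lambda>x. x * _"] power2_eq_square cong: if_cong)

lemma aperiodic_autocorr_spikes:
  assumes "0 < k" "k < n" "d < n"
  shows "aperiodic_autocorr n (\<lambda>e. if e = 0 then p else if e = k then q else 0) d
    = (if d = 0 then p\<^sup>2 + q\<^sup>2 else if d = k then p * q else 0)"
proof -
  let ?h = "\<lambda>e. if e = 0 then p else if e = k then q else (0::real)"
  have "?h e * ?h (e + d) = (if e = 0 then p * ?h d else 0) + (if e = k then q * ?h (k + d) else 0)" for e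
    using assms(1) by auto
  then have "aperiodic_autocorr n ?h d
      = (if 0 < n - d then p * ?h d else 0) + (if k < n - d then q * ?h (k + d) else 0)"
    unfolding aperiodic_autocorr_def by (simp add: sum.distrib)
  then show ?thesis
    using assms by (auto simp: power2_eq_square)
qed

text \<open>An approximation h of the target autocorrelation r is corrected lag by lag: a column
  with entries sqrt |\<delta>| and sgn \<delta> sqrt |\<delta>| at positions 0 and k adds \<delta> at lag k
  and 2 |\<delta>| at lag 0, and a last column with a single entry tops lag 0 up to 1.\<close>

lemma aperiodic_autocorr_realizable:
  fixes h r :: "nat \<Rightarrow> real"
  assumes "0 < n"
    and budget: "aperiodic_autocorr n h 0 + 2 * (\<Sum>d\<in>{1..<n}. \<bar>r d - aperiodic_autocorr n h d\<bar>) \<le> 1"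
  shows "\<exists>a. \<forall>d<n. (\<Sum>k<Suc n. aperiodic_autocorr n (a k) d) = (if d = 0 then 1 else r d)"
proof -
  define \<delta> where "\<delta> k = r k - aperiodic_autocorr n h k" for k
  define w where "w = sqrt (1 - aperiodic_autocorr n h 0 - 2 * (\<Sum>k\<in>{1..<n}. \<bar>\<delta> k\<bar>))"
  define a where "a k = (if k = 0 then h
      else if k < n then (\<lambda>e. if e = 0 then sqrt \<bar>\<delta> k\<bar> else if e = k then sgn (\<delta> k) * sqrt \<bar>\<delta> k\<bar> else 0)
      else (\<lambda>e. if e = 0 then w else 0))" for k
  have w_sq: "w\<^sup>2 = 1 - aperiodic_autocorr n h 0 - 2 * (\<Sum>k\<in>{1..<n}. \<bar>\<delta> k\<bar>)"
    unfolding w_def using budget by (simp add: \<delta>_def)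
  have columns: "(\<Sum>k<Suc n. g k) = g 0 + (\<Sum>k\<in>{1..<n}. g k) + g n" for g :: "nat \<Rightarrow> real"
    using \<open>0 < n\<close> by (simp add: sum.lessThan_Suc lessThan_atLeast0 sum.atLeast_Suc_lessThan)
  have "(\<Sum>k<Suc n. aperiodic_autocorr n (a k) d) = (if d = 0 then 1 else r d)" if "d < n" for d
  proof -
    have root_product: "sqrt \<bar>x\<bar> * (sgn x * sqrt \<bar>x\<bar>) = x"
      and root_square: "sgn x * sqrt \<bar>x\<bar> * (sgn x * sqrt \<bar>x\<bar>) = \<bar>x\<bar>" for x :: real
      by (simp_all add: mult_ac sgn_mult_abs) (simp add: sgn_if)
    have spike: "aperiodic_autocorr n (a k) d
        = (if d = 0 then 2 * \<bar>\<delta> k\<bar> else if d = k then \<delta> k else 0)" if "k \<in> {1..<n}" for k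
      using that \<open>d < n\<close>
      by (simp add: a_def aperiodic_autocorr_spikes power2_eq_square root_product root_square)
    have last: "aperiodic_autocorr n (a n) d = (if d = 0 then w\<^sup>2 else 0)"
      using \<open>d < n\<close> \<open>0 < n\<close> by (simp add: a_def aperiodic_autocorr_spike)
    have "(\<Sum>k\<in>{1..<n}. aperiodic_autocorr n (a k) d)
        = (\<Sum>k\<in>{1..<n}. if d = 0 then 2 * \<bar>\<delta> k\<bar> else if d = k then \<delta> k else 0)"
      by (rule sum.cong[OF refl spike])
    then show ?thesis
      using that \<open>0 < n\<close> unfolding columns last
      by (simp add: a_def w_sq sum_distrib_left \<delta>_def)
  qed
  then show ?thesis by blast
qed

section \<open>A 27-ary kernel with three queries\<close>

text \<open>mid_gram is the Gram matrix of the kernel between its second and third query; the two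
  seeds approximate the aperiodic autocorrelations required by rotation_search_kernel closely
  enough for aperiodic_autocorr_realizable, as checked in exact rational arithmetic.\<close>

definition mid_gram :: "nat \<Rightarrow> real" where
  "mid_gram d = [1, 59/100, 23/100, 2/25, 9/100, 3/100, -1/10, -4/25, -4/25, -3/20, -19/100,
    -27/100, -6/25, -11/50, -11/50, -6/25, -27/100, -19/100, -3/20, -4/25, -4/25, -1/10, 3/100,
    9/100, 2/25, 23/100, 59/100] ! d"

definition seed1 :: "nat \<Rightarrow> real" where
  "seed1 e = [520, 402, 253, 147, 169, 169, 119, 87, 61, 71, 75, 2, 7, -3, -12, -12, -76, -62, -61,
    -82, -120, -170, -153, -147, -256, -365, -339] ! e / 1024"

definition seed2 :: "nat \<Rightarrow> real" where
  "seed2 e = [848, 198, 34, -93, -56, -40, -91, -119, -128, -92, -72, -133, -100, -89, -72, -51,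
    -104, -57, -20, -21, -36, -48, 27, 88, 21, 57, 365] ! e / 1024"

lemma mid_gram_sym:
  assumes "0 < d" "d < 27"
  shows "mid_gram (27 - d) = mid_gram d"
proof -
  have "\<forall>d\<in>{1..<27}. mid_gram (27 - d) = mid_gram d"
    by (simp add: mid_gram_def numeral_eq_Suc atLeastLessThanSuc)
  then show ?thesis using assms by simp
qed

lemma seed1_budget:
  "aperiodic_autocorr 27 seed1 0 + 2 * (\<Sum>d\<in>{1..<27}.
     \<bar>(1 - 2 * real d / 27 + mid_gram d) / 2 - aperiodic_autocorr 27 seed1 d\<bar>) \<le> 1"
  by (simp add: aperiodic_autocorr_def seed1_def mid_gram_def lessThan_Suc numeral_eq_Suc
      atLeastLessThanSuc)

lemma seed2_budget:
  "aperiodic_autocorr 27 seed2 0 + 2 * (\<Sum>d\<in>{1..<27}.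
     \<bar>mid_gram d / 2 - aperiodic_autocorr 27 seed2 d\<bar>) \<le> 1"
  by (simp add: aperiodic_autocorr_def seed2_def mid_gram_def lessThan_Suc numeral_eq_Suc
      atLeastLessThanSuc)

lemma search_kernel_27: "\<exists>v. search_kernel 27 3 28 v"
proof -
  obtain a1 where a1: "\<forall>d<27. (\<Sum>k<28::nat. aperiodic_autocorr 27 (a1 k) d)
      = (if d = 0 then 1 else (1 - 2 * real d / 27 + mid_gram d) / 2)"
    using aperiodic_autocorr_realizable[OF _ seed1_budget] by auto
  obtain a2 where a2: "\<forall>d<27. (\<Sum>k<28::nat. aperiodic_autocorr 27 (a2 k) d)
      = (if d = 0 then 1 else mid_gram d / 2)"
    using aperiodic_autocorr_realizable[OF _ seed2_budget] by auto
  have a0: "(\<Sum>k<28::nat. aperiodic_autocorr 27 (\<lambda>_. 1 / sqrt (27 * 28)) d) = 1 - real d / 27"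
    if "d < 27" for d
    using that by (simp add: aperiodic_autocorr_const power_divide of_nat_diff field_simps)
  have "search_kernel 27 3 28 (\<lambda>s. if s = 0 then rotated 27 (\<lambda>_ _. 1 / sqrt (27 * 28))
      else if s = 1 then flipped (rotated 27 a1) else rotated 27 a2)"
    by (rule rotation_search_kernel) (use mid_gram_sym a0 a1 a2 in simp_all)
  then show ?thesis by blast
qed

lemma exists_power_ge_log:
  assumes "1 < b" "0 < N"
  shows "\<exists>R. N \<le> b ^ R \<and> real R < log (real b) (real N) + 1"
proof -
  define R where "R = (LEAST r. N \<le> b ^ r)"
  have "N < 2 ^ N" by (rule less_exp)
  also have "(2::nat) ^ N \<le> b ^ N" using assms(1) by (intro power_mono) auto
  finally have "N \<le> b ^ N" by simp
  then have "N \<le> b ^ R"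
    unfolding R_def by (rule LeastI)
  moreover have "real R < log (real b) (real N) + 1"
  proof (cases R)
    case 0
    have "0 \<le> log (real b) (real N)" using assms by simp
    then show ?thesis using 0 by simp
  next
    case (Suc R')
    then have "\<not> N \<le> b ^ R'"
      using not_less_Least[of R' "\<lambda>r. N \<le> b ^ r"] unfolding R_def by simp
    then have "real (b ^ R') < real N"
      by (simp only: not_le of_nat_less_iff)
    then have "real b ^ R' < real N"
      by simp
    then have "real b powr real R' < real N"
      using assms by (simp add: powr_realpow)
    then have "real R' < log (real b) (real N)"
      using assms by (subst less_log_iff) auto
    then show ?thesis
      using Suc by simp
  qed
  ultimately show ?thesis by blast
qed

theorem theorem4:
  "\<exists>C::real. \<forall>N::nat. N \<ge> 2 \<longrightarrow>
     (\<exists>(B::(nat \<times> nat) set) U T (out :: nat \<times> nat \<Rightarrow> nat).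
        finite B \<and> (0, 0) \<in> B \<and> unitary_on B U \<and>
        exact_on B U N T out (monotone_input N) (first_one N) \<and>
        real T \<le> log 3 (real N) + C)"
proof (intro exI[of _ 3] allI impI)
  fix N :: nat
  assume "N \<ge> 2"
  obtain v where kernel: "search_kernel 27 3 28 v"
    using search_kernel_27 by blast
  obtain R where R: "N \<le> 27 ^ R" "real R < log 27 (real N) + 1"
    using exists_power_ge_log[of 27 N] \<open>N \<ge> 2\<close> by auto
  have "log 27 (real N) = log 3 (real N) / 3"
    using log_base_pow[of 3 3 "real N"] by simp
  then have "real (3 * R) \<le> log 3 (real N) + 3"
    using R(2) by simp
  then show "\<exists>B U T out. finite B \<and> (0, 0) \<in> B \<and> unitary_on B U \<and>
      exact_on B U N T out (monotone_input N) (first_one N) \<and> real T \<le> log 3 (real N) + 3"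
    using search_kernel_exact_algorithm[OF kernel _ _ R(1)] \<open>N \<ge> 2\<close> by fastforce
qed

end
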